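(* Let $E$ be an extension of $\mathbb{Z}_\mathrm{max}$ and let $n$ be a positive integer. Then there is at most one subextension $L$ of $E$ (a subsemifield of $E$ containing the image of $\mathbb{Z}_\mathrm{max}$) such that $\mathrm{ui}(L/\mathbb{Z}_\mathrm{max})=n$.
   Context: A semifield is a commutative semiring in which every nonzero element is a unit. $\mathbb{Z}_\mathrm{max}=\mathbb{Z}\cup\{-\infty\}$ is the semifield with addition $\max$ and multiplication ordinary addition. An extension of a semifield $K$ is a semifield $E$ with an injective homomorphism $K\to E$. The unit index is $\mathrm{ui}(L/K)=|L^\times/K^\times|$. *)

theory Defs
  imports "HOL-Algebra.Ring"
begin

definition semifield :: "('a, 'b) ring_scheme \<Rightarrow> bool" where
  "semifield R \<longleftrightarrow> semiring R \<and> comm_monoid R \<and> \<one>\<^bsub>R\<^esub> \<noteq> \<zero>\<^bsub>R\<^esub> \<and>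
     (\<forall>x \<in> carrier R - {\<zero>\<^bsub>R\<^esub>}. x \<in> Units R)"

text \<open>The semifield Z_max = Z \<union> {-\<infinity>}; None represents -\<infinity>, addition is max,
  multiplication is ordinary addition.\<close>
definition zmax_add :: "int option \<Rightarrow> int option \<Rightarrow> int option" where
  "zmax_add a b = (case a of None \<Rightarrow> b | Some x \<Rightarrow>
      (case b of None \<Rightarrow> Some x | Some y \<Rightarrow> Some (max x y)))"

definition zmax_mult :: "int option \<Rightarrow> int option \<Rightarrow> int option" where
  "zmax_mult a b = (case a of None \<Rightarrow> None | Some x \<Rightarrow>
      (case b of None \<Rightarrow> None | Some y \<Rightarrow> Some (x + y)))"

definition Zmax :: "int option ring" where
  "Zmax = \<lparr>carrier = UNIV, monoid.mult = zmax_mult, one = Some 0,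
           zero = None, add = zmax_add\<rparr>"

definition semifield_hom :: "('a, 'c) ring_scheme \<Rightarrow> ('b, 'd) ring_scheme \<Rightarrow> ('a \<Rightarrow> 'b) \<Rightarrow> bool" where
  "semifield_hom K E h \<longleftrightarrow> h \<in> ring_hom K E \<and> h \<zero>\<^bsub>K\<^esub> = \<zero>\<^bsub>E\<^esub>"

definition extension :: "('a, 'c) ring_scheme \<Rightarrow> ('b, 'd) ring_scheme \<Rightarrow> ('a \<Rightarrow> 'b) \<Rightarrow> bool" where
  "extension K E h \<longleftrightarrow> semifield K \<and> semifield E \<and> semifield_hom K E h \<and> inj_on h (carrier K)"

definition subsemifield :: "'b set \<Rightarrow> ('b, 'd) ring_scheme \<Rightarrow> bool" where
  "subsemifield L E \<longleftrightarrow> L \<subseteq> carrier E \<and> \<zero>\<^bsub>E\<^esub> \<in> L \<and> \<one>\<^bsub>E\<^esub> \<in> L \<and>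
     (\<forall>x \<in> L. \<forall>y \<in> L. x \<oplus>\<^bsub>E\<^esub> y \<in> L \<and> x \<otimes>\<^bsub>E\<^esub> y \<in> L) \<and>
     (\<forall>x \<in> L - {\<zero>\<^bsub>E\<^esub>}. inv\<^bsub>E\<^esub> x \<in> L)"

definition subextension :: "('a, 'c) ring_scheme \<Rightarrow> ('b, 'd) ring_scheme \<Rightarrow> ('a \<Rightarrow> 'b) \<Rightarrow> 'b set \<Rightarrow> bool" where
  "subextension K E h L \<longleftrightarrow> subsemifield L E \<and> h ` carrier K \<subseteq> L"

text \<open>Unit index ui(L/K) = |L^\<times>/K^\<times>|, where K^\<times> is identified with its image h(K) - {0} in E;
  the quotient group is represented by its set of cosets x\<cdot>K^\<times>, x \<in> L^\<times>.
  (card is 0 for an infinite index.)\<close>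
definition unit_index :: "('a, 'c) ring_scheme \<Rightarrow> ('b, 'd) ring_scheme \<Rightarrow> ('a \<Rightarrow> 'b) \<Rightarrow> 'b set \<Rightarrow> nat" where
  "unit_index K E h L =
     card {(\<lambda>y. x \<otimes>\<^bsub>E\<^esub> y) ` (h ` carrier K - {\<zero>\<^bsub>E\<^esub>}) | x. x \<in> L - {\<zero>\<^bsub>E\<^esub>}}"

end

theory Submission
  imports Defs "HOL-Algebra.Multiplicative_Group"
begin

text \<open>An extension \<open>E\<close> of \<open>\<int>\<^sub>m\<^sub>a\<^sub>x\<close> is additively idempotent, so its unit group is
  torsion-free and \<open>n\<close>-th roots in \<open>E\<close> are unique. If \<open>L\<^sup>\<times>/\<int>\<^sub>m\<^sub>a\<^sub>x\<^sup>\<times>\<close> has order \<open>n\<close>, then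
  by Lagrange \<open>x\<^sup>n \<in> \<int>\<^sub>m\<^sub>a\<^sub>x\<^sup>\<times>\<close> for every \<open>x \<in> L\<^sup>\<times>\<close>, so \<open>L\<^sup>\<times>\<close> lies in the radical
  \<open>R = {x. x\<^sup>n \<in> \<int>\<^sub>m\<^sub>a\<^sub>x\<^sup>\<times>}\<close>. By uniqueness of roots, the coset of \<open>x \<in> R\<close> is determined by
  \<open>x\<^sup>n = h k\<close> modulo \<open>n\<close>, so \<open>R\<close> meets at most \<open>n\<close> cosets. Hence \<open>L\<^sup>\<times>\<close> exhausts the cosets
  of \<open>R\<close>, forcing \<open>L = R \<union> {\<zero>}\<close>, which depends only on \<open>n\<close>.\<close>

lemma (in normal) pow_card_rcosets_mem:
  assumes "x \<in> carrier G"
  shows "x [^] card (rcosets H) \<in> H"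
proof -
  interpret Q: group "G Mod H" by (rule factorgroup_is_group)
  have "H #> x \<in> carrier (G Mod H)"
    using assms by (simp add: carrier_FactGroup)
  then have "(H #> x) [^]\<^bsub>G Mod H\<^esub> card (rcosets H) = H"
    using Q.pow_order_eq_1 by (simp add: order_def FactGroup_def)
  then have "H #> (x [^] card (rcosets H)) = H"
    by (simp add: FactGroup_pow assms)
  then show ?thesis
    by (metis rcos_self nat_pow_closed assms subgroup_axioms)
qed

lemma (in comm_group) pow_index_mem_subgroup:
  assumes H: "subgroup H G" and K: "subgroup K G" and "H \<subseteq> K" and x: "x \<in> K"
  shows "x [^] card {H #> y | y. y \<in> K} \<in> H"
proof -
  let ?K = "G\<lparr>carrier := K\<rparr>"
  interpret K: group ?K by (rule subgroup_imp_group[OF K])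
  have "comm_group ?K"
    by (rule K.group_comm_groupI) (use K in \<open>auto intro: m_comm dest: subgroup.mem_carrier\<close>)
  then have "H \<lhd> ?K"
    by (intro comm_group.subgroup_imp_normal subgroup_incl assms)
  then have "x [^]\<^bsub>?K\<^esub> card (rcosets\<^bsub>?K\<^esub> H) \<in> H"
    using x by (intro normal.pow_card_rcosets_mem) auto
  moreover have "rcosets\<^bsub>?K\<^esub> H = {H #> y | y. y \<in> K}"
    by (auto simp: RCOSETS_def r_coset_def)
  ultimately show ?thesis
    by (simp flip: nat_pow_consistent)
qed

lemma (in abelian_monoid) finsum_shift_cyclic:
  assumes f: "f \<in> {..Suc k} \<rightarrow> carrier G" and "f (Suc k) = f 0"
  shows "(\<Oplus>i\<in>{..k}. f (Suc i)) = (\<Oplus>i\<in>{..k}. f i)"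
proof (cases k)
  case 0
  then show ?thesis using assms by (simp add: Pi_def del: atMost_0)
next
  case (Suc j)
  have "(\<Oplus>i\<in>{..k}. f (Suc i)) = f 0 \<oplus> (\<Oplus>i\<in>{..j}. f (Suc i))"
    using f assms(2) Suc by (simp add: Pi_def)
  also have "\<dots> = (\<Oplus>i\<in>{..k}. f i)"
    using f Suc by (simp add: finsum_Suc2 Pi_def a_comm del: finsum_Suc)
  finally show ?thesis .
qed

locale idempotent_semifield = semiring E + comm_monoid E for E (structure) +
  assumes one_neq_zero: "\<one> \<noteq> \<zero>"
    and nonzero_Units: "\<lbrakk>x \<in> carrier E; x \<noteq> \<zero>\<rbrakk> \<Longrightarrow> x \<in> Units E"
    and one_add_one: "\<one> \<oplus> \<one> = \<one>"
begin

lemma add_idem: "x \<in> carrier E \<Longrightarrow> x \<oplus> x = x"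
  by (metis one_add_one r_distr r_one one_closed)

lemma add_eq_zero_imp_zero:
  assumes "x \<in> carrier E" "y \<in> carrier E" "x \<oplus> y = \<zero>"
  shows "x = \<zero>"
proof -
  have "x = x \<oplus> (x \<oplus> y)" using assms by simp
  also have "\<dots> = (x \<oplus> x) \<oplus> y" using assms by (simp add: a_assoc)
  also have "\<dots> = \<zero>" using assms by (simp add: add_idem)
  finally show ?thesis .
qed

lemma finsum_eq_zero_imp_zero:
  assumes "finite A" "f \<in> A \<rightarrow> carrier E" "(\<Oplus>i\<in>A. f i) = \<zero>" "a \<in> A"
  shows "f a = \<zero>"
  using assms
proof (induction A rule: finite_induct)
  case (insert b A)
  then have "f b \<oplus> (\<Oplus>i\<in>A. f i) = \<zero>" by (simp add: finsum_insert)
  moreover have "f b \<in> carrier E" "(\<Oplus>i\<in>A. f i) \<in> carrier E"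
    using insert.prems by auto
  ultimately have "f b = \<zero>" and "(\<Oplus>i\<in>A. f i) = \<zero>"
    by (metis add_eq_zero_imp_zero a_comm)+
  then show ?case using insert by auto
qed simp

lemma Units_neq_zero: "x \<in> Units E \<Longrightarrow> x \<noteq> \<zero>"
  by (metis Units_r_inv Units_inv_closed Units_closed l_null one_neq_zero)

lemma mult_neq_zero:
  "\<lbrakk>x \<in> carrier E; y \<in> carrier E; x \<noteq> \<zero>; y \<noteq> \<zero>\<rbrakk> \<Longrightarrow> x \<otimes> y \<noteq> \<zero>"
  using nonzero_Units Units_neq_zero Units_m_closed by blast

text \<open>If \<open>u [^] Suc k = \<one>\<close>, multiplication by \<open>u\<close> only permutes the summands of
  \<open>s = \<one> \<oplus> u \<oplus> \<dots> \<oplus> u [^] k\<close>, and \<open>s\<close> is a unit since addition is zero-sum-free;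
  cancelling \<open>s\<close> in \<open>s \<otimes> u = s\<close> gives \<open>u = \<one>\<close>.\<close>
lemma pow_eq_one_imp_eq_one:
  fixes m :: nat
  assumes u: "u \<in> carrier E" and "m > 0" and um: "u [^] m = \<one>"
  shows "u = \<one>"
proof -
  obtain k where m: "m = Suc k" using \<open>m > 0\<close> gr0_implies_Suc by blast
  define s where "s = (\<Oplus>i\<in>{..k}. u [^] i)"
  have s_carrier: "s \<in> carrier E" using u by (simp add: s_def)
  have "s \<otimes> u = (\<Oplus>i\<in>{..k}. u [^] Suc i)"
    using u by (simp add: s_def finsum_ldistr)
  also have "\<dots> = s"
    unfolding s_def using u um m by (intro finsum_shift_cyclic) auto
  finally have su: "s \<otimes> u = s \<otimes> \<one>" using s_carrier by simp
  have "s \<noteq> \<zero>"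
    using finsum_eq_zero_imp_zero[of "{..k}" "\<lambda>i. u [^] i" 0] u one_neq_zero by (auto simp: s_def)
  then show ?thesis
    using Units_l_cancel nonzero_Units s_carrier u su by (metis one_closed)
qed

lemma pow_eq_pow_imp_eq:
  fixes m :: nat
  assumes x: "x \<in> carrier E" and y: "y \<in> carrier E" "y \<noteq> \<zero>"
    and "m > 0" and e: "x [^] m = y [^] m"
  shows "x = y"
proof -
  have yU: "y \<in> Units E" using nonzero_Units y by blast
  have "(x \<otimes> inv y) [^] m = y [^] m \<otimes> inv y [^] m"
    using x yU by (simp add: nat_pow_distrib e)
  also have "\<dots> = (y \<otimes> inv y) [^] m"
    by (rule nat_pow_distrib[symmetric, OF Units_closed[OF yU] Units_inv_closed[OF yU]])
  also have "\<dots> = \<one>" using yU by simp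
  finally have "x \<otimes> inv y = \<one>"
    by (rule pow_eq_one_imp_eq_one[OF m_closed[OF x Units_inv_closed[OF yU]] \<open>m > 0\<close>])
  have "x = x \<otimes> (inv y \<otimes> y)" using x yU by simp
  also have "\<dots> = x \<otimes> inv y \<otimes> y"
    by (rule m_assoc[symmetric, OF x Units_inv_closed[OF yU] Units_closed[OF yU]])
  also have "\<dots> = y" using y \<open>x \<otimes> inv y = \<one>\<close> by simp
  finally show ?thesis .
qed

lemma subsemifield_Units_subgroup:
  assumes "subsemifield L E"
  shows "subgroup (L - {\<zero>}) (units_of E)"
proof -
  interpret U: group "units_of E" by (rule units_group)
  have L: "L \<subseteq> carrier E" "\<one> \<in> L" "\<And>x y. \<lbrakk>x \<in> L; y \<in> L\<rbrakk> \<Longrightarrow> x \<otimes> y \<in> L"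
    "\<And>x. x \<in> L - {\<zero>} \<Longrightarrow> inv x \<in> L"
    using assms unfolding subsemifield_def by auto
  have units: "L - {\<zero>} \<subseteq> Units E" using L(1) nonzero_Units by blast
  show ?thesis
  proof (rule U.subgroupI)
    show "L - {\<zero>} \<subseteq> carrier (units_of E)" using units by (simp add: units_of_carrier)
    show "L - {\<zero>} \<noteq> {}" using L(2) one_neq_zero by blast
  next
    fix x assume x: "x \<in> L - {\<zero>}"
    then have "x \<in> Units E" using units by blast
    then show "inv\<^bsub>units_of E\<^esub> x \<in> L - {\<zero>}"
      using L(4) x by (simp add: units_of_inv Units_neq_zero)
  next
    fix x y assume "x \<in> L - {\<zero>}" "y \<in> L - {\<zero>}"
    then show "x \<otimes>\<^bsub>units_of E\<^esub> y \<in> L - {\<zero>}"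
      using L(1,3) mult_neq_zero[of x y] by (auto simp: units_of_mult)
  qed
qed

end

lemma Zmax_simps [simp]:
  "carrier Zmax = UNIV" "\<one>\<^bsub>Zmax\<^esub> = Some 0" "\<zero>\<^bsub>Zmax\<^esub> = None"
  "Some a \<otimes>\<^bsub>Zmax\<^esub> Some b = Some (a + b)"
  "Some a \<oplus>\<^bsub>Zmax\<^esub> Some b = Some (max a b)"
  by (simp_all add: Zmax_def zmax_mult_def zmax_add_def)

locale Zmax_extension =
  fixes E :: "('b, 'd) ring_scheme" (structure) and h :: "int option \<Rightarrow> 'b"
  assumes extension: "extension Zmax E h"
begin

lemma h_hom: "h \<in> ring_hom Zmax E" and h_None: "h None = \<zero>" and inj_h: "inj h"
  using extension by (auto simp: extension_def semifield_hom_def)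

lemma h_closed [simp]: "h x \<in> carrier E"
  using h_hom by (auto simp: ring_hom_def)

lemma h_mult: "h (x \<otimes>\<^bsub>Zmax\<^esub> y) = h x \<otimes> h y"
  using h_hom by (auto simp: ring_hom_def)

lemma h_add: "h (x \<oplus>\<^bsub>Zmax\<^esub> y) = h x \<oplus> h y"
  using h_hom by (auto simp: ring_hom_def)

lemma h_Some_0: "h (Some 0) = \<one>"
  using h_hom ring_hom_one by fastforce

lemma h_Some_neq_zero: "h (Some k) \<noteq> \<zero>"
  using inj_h h_None by (metis injD option.distinct(1))

sublocale idempotent_semifield E
proof -
  have sf: "semifield E" using extension by (simp add: extension_def)
  have "\<one> \<oplus> \<one> = \<one>"
    using h_add[of "Some 0" "Some 0"] by (simp add: h_Some_0)
  with sf show "idempotent_semifield E"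
    by (auto simp: semifield_def idempotent_semifield_def idempotent_semifield_axioms_def)
qed

lemma h_Some_pow: "h (Some k) [^] (m :: nat) = h (Some (int m * k))"
  by (induction m) (simp_all add: h_Some_0 algebra_simps flip: h_mult)

definition base_units :: "'b set" where
  "base_units = h ` carrier Zmax - {\<zero>}"

definition unit_coset :: "'b \<Rightarrow> 'b set" where
  "unit_coset x = (\<lambda>y. x \<otimes> y) ` base_units"

definition radical :: "nat \<Rightarrow> 'b set" where
  "radical n = {x \<in> carrier E - {\<zero>}. x [^] n \<in> base_units}"

lemma base_units_eq: "base_units = range (\<lambda>k. h (Some k))"
proof -
  have "range h = insert (h None) (range (\<lambda>k. h (Some k)))"
    by (auto simp: image_iff) (metis option.exhaust)
  then show ?thesis
    unfolding base_units_def using h_Some_neq_zero h_None by auto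
qed

lemma unit_index_eq_card: "unit_index Zmax E h L = card (unit_coset ` (L - {\<zero>}))"
  unfolding unit_index_def unit_coset_def base_units_def by (rule arg_cong[where f = card]) blast

lemma subsemifield_range_h: "subsemifield (range h) E"
  unfolding subsemifield_def
proof (intro conjI ballI)
  fix x assume "x \<in> range h - {\<zero>}"
  then obtain k where x: "x = h (Some k)" using h_None by (metis DiffE image_iff insertI1 not_None_eq)
  have "inv x = h (Some (- k))"
    using x by (intro inv_char) (simp_all add: h_Some_0 flip: h_mult)
  then show "inv x \<in> range h" by simp
qed (auto intro: range_eqI[where x = None] range_eqI[where x = "Some 0"]
          simp: h_None h_Some_0 simp flip: h_add h_mult)

lemma base_units_subgroup: "subgroup base_units (units_of E)"
  using subsemifield_Units_subgroup[OF subsemifield_range_h] by (simp add: base_units_def)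

lemma subextension_units_subset_radical:
  assumes L: "subsemifield L E" and hL: "range h \<subseteq> L"
  shows "L - {\<zero>} \<subseteq> radical (card (unit_coset ` (L - {\<zero>})))"
proof
  fix x assume x: "x \<in> L - {\<zero>}"
  interpret U: comm_group "units_of E" by (rule units_comm_group)
  have LU: "subgroup (L - {\<zero>}) (units_of E)" by (rule subsemifield_Units_subgroup[OF L])
  have "base_units \<subseteq> L - {\<zero>}" using hL by (auto simp: base_units_def)
  moreover have "{base_units #>\<^bsub>units_of E\<^esub> y | y. y \<in> L - {\<zero>}} = unit_coset ` (L - {\<zero>})"
  proof -
    have "base_units #>\<^bsub>units_of E\<^esub> y = unit_coset y" if "y \<in> L - {\<zero>}" for y
    proof -
      have "y \<in> carrier E" "base_units \<subseteq> carrier E"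
        using that L by (auto simp: subsemifield_def base_units_def)
      then show ?thesis
        unfolding r_coset_def unit_coset_def units_of_mult by (auto intro: m_comm)
    qed
    then show ?thesis by blast
  qed
  ultimately have "x [^]\<^bsub>units_of E\<^esub> card (unit_coset ` (L - {\<zero>})) \<in> base_units"
    using U.pow_index_mem_subgroup[OF base_units_subgroup LU] x by metis
  moreover have "x \<in> Units E" using subgroup.subset[OF LU] x by (auto simp: units_of_carrier)
  ultimately show "x \<in> radical (card (unit_coset ` (L - {\<zero>})))"
    using x L by (auto simp: radical_def units_of_pow subsemifield_def)
qed

lemma unit_coset_mult_base:
  assumes "y \<in> carrier E"
  shows "unit_coset (y \<otimes> h (Some c)) = unit_coset y"
proof -
  have "(\<lambda>z. h (Some c) \<otimes> z) ` base_units = range (\<lambda>k. h (Some (c + k)))"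
    unfolding base_units_eq image_image by (simp flip: h_mult)
  also have "\<dots> = base_units"
    unfolding base_units_eq using image_comp[of "\<lambda>k. h (Some k)" "(+) c" UNIV] by simp
  finally have shift: "(\<lambda>z. h (Some c) \<otimes> z) ` base_units = base_units" .
  have "unit_coset (y \<otimes> h (Some c)) = (\<lambda>z. y \<otimes> z) ` (\<lambda>z. h (Some c) \<otimes> z) ` base_units"
    unfolding unit_coset_def image_image base_units_eq using assms by (auto simp: m_assoc)
  then show ?thesis by (simp add: shift unit_coset_def)
qed

lemma unit_coset_eq_if_pow_congruent:
  fixes n :: nat
  assumes "n > 0" and x: "x \<in> carrier E" and y: "y \<in> carrier E" "y \<noteq> \<zero>"
    and xa: "x [^] n = h (Some a)" and yb: "y [^] n = h (Some b)"
    and "a mod int n = b mod int n"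
  shows "unit_coset x = unit_coset y"
proof -
  have "int n dvd a - b" using \<open>a mod int n = b mod int n\<close> by (simp add: mod_eq_dvd_iff)
  then obtain c where "a - b = int n * c" by (elim dvdE)
  then have c: "a = b + int n * c" by simp
  have "(y \<otimes> h (Some c)) [^] n = y [^] n \<otimes> h (Some c) [^] n"
    by (rule nat_pow_distrib[OF y(1) h_closed])
  also have "\<dots> = h (Some a)"
    by (simp add: yb h_Some_pow c flip: h_mult)
  finally have "x = y \<otimes> h (Some c)"
    using xa pow_eq_pow_imp_eq[OF x m_closed[OF y(1) h_closed] _ \<open>n > 0\<close>]
      mult_neq_zero[OF y(1) h_closed y(2) h_Some_neq_zero]
    by simp
  then show ?thesis using unit_coset_mult_base y by simp
qed

lemma unit_cosets_radical_bounded: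
  assumes "n > 0"
  shows "finite (unit_coset ` radical n)" and "card (unit_coset ` radical n) \<le> n"
proof -
  define P where "P r x \<longleftrightarrow> x \<in> radical n \<and> (\<exists>a. x [^] n = h (Some a) \<and> a mod int n = r)" for r x
  have sub: "unit_coset ` radical n \<subseteq> (\<lambda>r. unit_coset (SOME x. P r x)) ` {0..<int n}"
    (is "_ \<subseteq> ?reps")
  proof
    fix C assume "C \<in> unit_coset ` radical n"
    then obtain x a where x: "x \<in> radical n" "C = unit_coset x" and xa: "x [^] n = h (Some a)"
      by (auto simp: radical_def base_units_eq)
    let ?r = "a mod int n"
    have "P ?r x" using x xa by (auto simp: P_def)
    then have "P ?r (SOME x. P ?r x)" by (rule someI)
    then obtain a' where x': "(SOME x. P ?r x) \<in> radical n"
      "(SOME x. P ?r x) [^] n = h (Some a')" "a' mod int n = ?r"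
      by (auto simp: P_def)
    have "unit_coset (SOME x. P ?r x) = unit_coset x"
      by (rule unit_coset_eq_if_pow_congruent[OF \<open>n > 0\<close> _ _ _ x'(2) xa x'(3)])
        (use x x' in \<open>auto simp: radical_def\<close>)
    moreover have "?r \<in> {0..<int n}" using \<open>n > 0\<close> by simp
    ultimately show "C \<in> ?reps" using x(2) by blast
  qed
  have "finite ?reps" by simp
  then show "finite (unit_coset ` radical n)" using sub finite_subset by blast
  have "card (unit_coset ` radical n) \<le> card ?reps" using \<open>finite ?reps\<close> sub by (rule card_mono)
  also have "\<dots> \<le> card {0..<int n}" by (rule card_image_le) simp
  finally show "card (unit_coset ` radical n) \<le> n" by simp
qed

lemma subextension_eq_radical:
  assumes L: "subsemifield L E" and hL: "range h \<subseteq> L"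
    and n: "card (unit_coset ` (L - {\<zero>})) = n" "n > 0"
  shows "L = insert \<zero> (radical n)"
proof -
  have sub: "L - {\<zero>} \<subseteq> radical n"
    using subextension_units_subset_radical[OF L hL] n by simp
  have cosets: "unit_coset ` (L - {\<zero>}) = unit_coset ` radical n"
    by (rule card_seteq[OF unit_cosets_radical_bounded(1)[OF n(2)] image_mono[OF sub]])
      (use unit_cosets_radical_bounded(2)[OF n(2)] n(1) in simp)
  have "radical n \<subseteq> L"
  proof
    fix x assume x: "x \<in> radical n"
    then obtain y where y: "y \<in> L - {\<zero>}" and "unit_coset x = unit_coset y"
      using cosets by (metis image_iff)
    moreover have "x \<in> unit_coset x"
      using x h_Some_0 unfolding unit_coset_def base_units_eq radical_def
      by (auto simp: image_iff intro!: exI[of _ 0])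
    ultimately obtain k where "x = y \<otimes> h (Some k)"
      by (auto simp: unit_coset_def base_units_eq)
    then show "x \<in> L" using y hL L by (auto simp: subsemifield_def)
  qed
  moreover have "\<zero> \<in> L" using L by (simp add: subsemifield_def)
  ultimately show ?thesis using sub by auto
qed

end

theorem mainTheorem7:
  fixes E :: "('b, 'd) ring_scheme" and h :: "int option \<Rightarrow> 'b" and n :: nat
  assumes "extension Zmax E h"
    and "n > 0"
  shows "\<forall>L1 L2. subextension Zmax E h L1 \<and> unit_index Zmax E h L1 = n \<and>
                 subextension Zmax E h L2 \<and> unit_index Zmax E h L2 = n \<longrightarrow> L1 = L2"
proof -
  interpret Zmax_extension E h by unfold_locales (rule assms(1))
  have "L = insert \<zero>\<^bsub>E\<^esub> (radical n)"
    if "subextension Zmax E h L" and "unit_index Zmax E h L = n" for L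
    using that subextension_eq_radical assms(2) by (simp add: subextension_def unit_index_eq_card)
  then show ?thesis by blast
qed

end
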